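(* Let $q$ be a prime power, $e\ge 2$, $a\in\mathbb{F}_{q^e}^*$, and $\ell=q^{e-1}+\cdots+q+1$. Let $r$ and $s$ be positive integers with $r\equiv s\pmod{\ell}$. Suppose that $x^s(x^{q-1}+a)$ does not permute $\mathbb{F}_{q^e}$. If $\sum_{A\in S_{N,s}}\binom{N}{A}a^{N-A}\neq 0$ for some $N\in\{1,\dots,q^e-2\}$ with $q-1\mid N$, then $x^r(x^{q-1}+a)$ does not permute $\mathbb{F}_{q^e}$.
   Context: For a positive integer $t$ and an integer $N\ge 1$, $S_{N,t}=\{A\in\mathbb{Z}: A=\frac{j(q^e-1)-tN}{q-1}\text{ for some } j\in\mathbb{Z},\ 0\le A\le N\}$. Binomial coefficients are interpreted in $\mathbb{F}_{q^e}$. *)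

theory Defs
  imports "HOL-Number_Theory.Number_Theory"
begin

definition S_set :: "nat \<Rightarrow> nat \<Rightarrow> nat \<Rightarrow> nat \<Rightarrow> nat set" where
  "S_set q e N t = {A. A \<le> N \<and>
     (\<exists>j::int. int A * (int q - 1) = j * (int q ^ e - 1) - int t * int N)}"

end

(* Hermite's criterion: if f permutes a field with Q elements, then the sum of f(x)^N over the
   field is the power sum of x^N, which vanishes for 0 < N < Q - 1. Since Q - 1 = (q - 1) l, the
   monomials x^r and x^s agree after raising to any power divisible by q - 1, so for such N the
   power sums of x^r (x^(q-1) + a) and x^s (x^(q-1) + a) coincide. Expanding the latter binomially
   and using that the sum of x^m over the field is -1 when (Q - 1) | m and 0 otherwise gives
   - sum_{A in S_(N,s)} (N choose A) a^(N-A), which is nonzero by hypothesis. *)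

theory Submission
  imports Defs "HOL-Library.Cardinality" "HOL-Computational_Algebra.Polynomial"
begin

lemma two_le_card_UNIV_field: "2 \<le> CARD('f::{field,finite})"
  using card_mono[of UNIV "{0::'f, 1}"] by simp

lemma power_card_minus_one_eq_1:
  fixes x :: "'f::{field,finite}"
  assumes "x \<noteq> 0"
  shows "x ^ (CARD('f) - 1) = 1"
proof -
  let ?U = "UNIV - {0::'f}"
  have "(\<Prod>y\<in>?U. y) = (\<Prod>y\<in>?U. x * y)"
    by (rule prod.reindex_bij_witness[of _ "\<lambda>y. x * y" "\<lambda>y. y / x"]) (use assms in auto)
  also have "\<dots> = x ^ (CARD('f) - 1) * (\<Prod>y\<in>?U. y)"
    by (simp add: prod.distrib card_Diff_subset)
  finally show ?thesis
    by (simp add: prod_zero_iff)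
qed

lemma power_eq_power_mod_card_minus_one:
  fixes x :: "'f::{field,finite}"
  assumes "x \<noteq> 0"
  shows "x ^ m = x ^ (m mod (CARD('f) - 1))"
proof -
  have "x ^ m = (x ^ (CARD('f) - 1)) ^ (m div (CARD('f) - 1)) * x ^ (m mod (CARD('f) - 1))"
    by (simp flip: power_mult power_add)
  also have "x ^ (CARD('f) - 1) = 1"
    using assms by (rule power_card_minus_one_eq_1)
  finally show ?thesis
    by simp
qed

lemma power_eq_power_if_cong_card_minus_one:
  fixes x :: "'f::{field,finite}"
  assumes "[m = n] (mod CARD('f) - 1)" "0 < m" "0 < n"
  shows "x ^ m = x ^ n"
proof (cases "x = 0")
  case False
  then show ?thesis
    using assms(1) power_eq_power_mod_card_minus_one[of x] unfolding cong_def by metis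
qed (use assms in \<open>simp add: zero_power\<close>)

lemma exists_power_ne_1:
  assumes "0 < m" "m < CARD('f::{field,finite}) - 1"
  shows "\<exists>c::'f. c \<noteq> 0 \<and> c ^ m \<noteq> 1"
proof (rule ccontr)
  let ?p = "monom (1::'f) m + [:-1:]"
  assume "\<not> ?thesis"
  then have roots: "UNIV - {0::'f} \<subseteq> {x. poly ?p x = 0}"
    by (auto simp: poly_monom)
  have deg: "degree ?p = m"
    using assms(1) by (simp add: degree_add_eq_left degree_monom_eq)
  then have nz: "?p \<noteq> 0"
    using assms(1) by auto
  have "CARD('f) - 1 \<le> card {x. poly ?p x = 0}"
    using card_mono[OF poly_roots_finite[OF nz] roots] by (simp add: card_Diff_subset)
  also have "\<dots> \<le> m"
    using card_poly_roots_bound[OF nz] deg by simp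
  finally show False
    using assms(2) by simp
qed

lemma sum_UNIV_power:
  assumes "0 < m"
  shows "(\<Sum>x::'f::{field,finite}\<in>UNIV. x ^ m) = (if (CARD('f) - 1) dvd m then -1 else 0)"
proof (cases "(CARD('f) - 1) dvd m")
  case True
  then have "(\<Sum>x::'f\<in>UNIV. x ^ m) = (\<Sum>x::'f\<in>UNIV. if x = 0 then 0 else 1)"
    using assms by (intro sum.cong) (auto simp: power_eq_power_mod_card_minus_one[of _ m])
  also have "\<dots> = of_nat CARD('f) - 1"
    by (simp add: sum.If_cases Compl_eq_Diff_UNIV card_Diff_subset of_nat_diff)
  also have "\<dots> = -1"
    by (simp add: of_nat_eq_0_iff_char_dvd CHAR_dvd_CARD)
  finally show ?thesis
    using True by simp
next
  case False
  define k where "k = m mod (CARD('f) - 1)"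
  have "0 < k" "k < CARD('f) - 1"
    using False two_le_card_UNIV_field[where 'f='f] by (auto simp: k_def mod_greater_zero_iff_not_dvd)
  then obtain c :: 'f where c: "c \<noteq> 0" "c ^ k \<noteq> 1"
    using exists_power_ne_1 by blast
  have reduce: "(\<Sum>x::'f\<in>UNIV. x ^ m) = (\<Sum>x::'f\<in>UNIV. x ^ k)"
    using assms \<open>0 < k\<close>
    by (intro sum.cong refl power_eq_power_if_cong_card_minus_one) (simp_all add: k_def cong_def)
  have "(\<Sum>x::'f\<in>UNIV. x ^ k) = (\<Sum>x::'f\<in>UNIV. (c * x) ^ k)"
    by (rule sum.reindex_bij_witness[of _ "\<lambda>y. c * y" "\<lambda>y. y / c"]) (use c in auto)
  also have "\<dots> = c ^ k * (\<Sum>x::'f\<in>UNIV. x ^ k)"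
    by (simp add: power_mult_distrib sum_distrib_left)
  finally have "(\<Sum>x::'f\<in>UNIV. x ^ k) = 0"
    using c by (metis mult_cancel_right1)
  then show ?thesis
    using False reduce by simp
qed

lemma sum_UNIV_power_eq_0_if_bij:
  fixes f :: "'f::{field,finite} \<Rightarrow> 'f"
  assumes "bij f" "0 < N" "\<not> (CARD('f) - 1) dvd N"
  shows "(\<Sum>x\<in>UNIV. f x ^ N) = 0"
proof -
  have "(\<Sum>x\<in>UNIV. f x ^ N) = (\<Sum>y\<in>UNIV. y ^ N)"
    using assms(1) by (rule sum.reindex_bij_betw)
  then show ?thesis
    using assms(2,3) by (simp add: sum_UNIV_power)
qed

lemma sum_UNIV_power_binomial:
  fixes a :: "'f::{field,finite}"
  assumes "0 < s" "0 < N"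
  shows "(\<Sum>x\<in>UNIV. (x ^ s * (x ^ d + a)) ^ N) =
    - (\<Sum>A | A \<le> N \<and> (CARD('f) - 1) dvd (s * N + d * A). of_nat (N choose A) * a ^ (N - A))"
proof -
  have "(\<Sum>x\<in>UNIV. (x ^ s * (x ^ d + a)) ^ N) =
      (\<Sum>x\<in>UNIV. \<Sum>A\<le>N. of_nat (N choose A) * a ^ (N - A) * x ^ (s * N + d * A))"
    by (simp add: power_mult_distrib binomial_ring sum_distrib_left power_add
        flip: power_mult add: mult_ac)
  also have "\<dots> = (\<Sum>A\<le>N. of_nat (N choose A) * a ^ (N - A) * (\<Sum>x\<in>UNIV. x ^ (s * N + d * A)))"
    by (subst sum.swap) (simp add: sum_distrib_left)
  also have "\<dots> = (\<Sum>A\<le>N. if (CARD('f) - 1) dvd (s * N + d * A)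
      then - (of_nat (N choose A) * a ^ (N - A)) else 0)"
    using assms by (intro sum.cong refl) (simp add: sum_UNIV_power)
  also have "\<dots> = - (\<Sum>A | A \<le> N \<and> (CARD('f) - 1) dvd (s * N + d * A).
      of_nat (N choose A) * a ^ (N - A))"
    by (simp add: sum.If_cases sum_negf Int_def atMost_def conj_commute)
  finally show ?thesis .
qed

lemma mult_binomial_power_eq_if_cong:
  fixes x a :: "'f::{field,finite}"
  assumes "[r = s] (mod l)" "(CARD('f) - 1) dvd d * l" "d dvd N" "0 < r" "0 < s" "0 < N"
  shows "(x ^ r * (x ^ d + a)) ^ N = (x ^ s * (x ^ d + a)) ^ N"
proof -
  obtain M where M: "N = d * M"
    using assms(3) ..
  have cong: "[d * r = d * s] (mod CARD('f) - 1)"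
    using cong_dvd_modulus_nat[OF cong_cmult_leftI[OF assms(1)] assms(2)] .
  have "(x ^ r) ^ N = (x ^ (d * r)) ^ M"
    by (simp add: M mult_ac flip: power_mult)
  also have "x ^ (d * r) = x ^ (d * s)"
    using cong assms(4-6) M
    by (intro power_eq_power_if_cong_card_minus_one) auto
  also have "(x ^ (d * s)) ^ M = (x ^ s) ^ N"
    by (simp add: M mult_ac flip: power_mult)
  finally show ?thesis
    by (simp add: power_mult_distrib)
qed

lemma diff_one_mult_sum_power_nat: "(q - 1) * (\<Sum>i<e. q ^ i) = q ^ e - (1::nat)"
proof (cases "q = 0")
  case False
  then have "int ((q - 1) * (\<Sum>i<e. q ^ i)) = int (q ^ e - 1)"
    by (simp add: of_nat_diff power_diff_1_eq)
  then show ?thesis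
    by (simp only: of_nat_eq_iff)
qed (simp add: power_0_left)

lemma S_set_eq_dvd:
  assumes "1 \<le> q"
  shows "S_set q e N t = {A. A \<le> N \<and> (q ^ e - 1) dvd (t * N + (q - 1) * A)}"
proof -
  have "(q ^ e - 1) dvd (t * N + (q - 1) * A) \<longleftrightarrow>
      (\<exists>j::int. int A * (int q - 1) = j * (int q ^ e - 1) - int t * int N)" for A
  proof -
    have "(q ^ e - 1) dvd (t * N + (q - 1) * A) \<longleftrightarrow>
        (\<exists>j::int. int t * int N + int A * (int q - 1) = (int q ^ e - 1) * j)"
      using assms by (simp flip: int_dvd_int_iff add: dvd_def of_nat_diff mult.commute)
    also have "\<dots> \<longleftrightarrow> (\<exists>j::int. int A * (int q - 1) = j * (int q ^ e - 1) - int t * int N)"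
      by (intro ex_cong1) (auto simp: algebra_simps)
    finally show ?thesis .
  qed
  then show ?thesis
    unfolding S_set_def by blast
qed

theorem lemma2p3:
  fixes a :: "'f::{field,finite}"
    and q e r s :: nat
  assumes q_pp: "\<exists>p k. prime p \<and> k \<ge> 1 \<and> q = p ^ k"
    and e_ge: "e \<ge> 2"
    and card_F: "card (UNIV :: 'f set) = q ^ e"
    and a_nz: "a \<noteq> 0"
    and r_pos: "r > 0" and s_pos: "s > 0"
    and rs_cong: "[r = s] (mod (\<Sum>i<e. q ^ i))"
    and s_not_perm: "\<not> bij (\<lambda>x::'f. x ^ s * (x ^ (q - 1) + a))"
    and N_ex: "\<exists>N\<in>{1..q ^ e - 2}. (q - 1) dvd N \<and>
                 (\<Sum>A\<in>S_set q e N s. of_nat (N choose A) * a ^ (N - A)) \<noteq> (0::'f)"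
  shows "\<not> bij (\<lambda>x::'f. x ^ r * (x ^ (q - 1) + a))"
proof
  assume bij_r: "bij (\<lambda>x::'f. x ^ r * (x ^ (q - 1) + a))"
  obtain N where N_range: "N \<in> {1..q ^ e - 2}" and N_dvd: "(q - 1) dvd N"
    and sum_ne_0: "(\<Sum>A\<in>S_set q e N s. of_nat (N choose A) * a ^ (N - A)) \<noteq> (0::'f)"
    using N_ex by blast
  then have N_pos: "0 < N" and N_le: "N \<le> q ^ e - 2"
    by simp_all
  have "1 \<le> q"
  proof -
    from q_pp obtain p k where "prime p" "q = p ^ k"
      by blast
    then show ?thesis
      using prime_gt_0_nat[of p] by (simp add: Suc_le_eq)
  qed
  have card_dvd: "(CARD('f) - 1) dvd (q - 1) * (\<Sum>i<e. q ^ i)"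
    unfolding card_F diff_one_mult_sum_power_nat by simp
  have not_dvd: "\<not> (CARD('f) - 1) dvd N"
    using N_pos N_le card_F dvd_imp_le[of "CARD('f) - 1" N] by linarith
  have "(\<Sum>x\<in>UNIV. (x ^ s * (x ^ (q - 1) + a)) ^ N) = (\<Sum>x\<in>UNIV. (x ^ r * (x ^ (q - 1) + a)) ^ N)"
    using mult_binomial_power_eq_if_cong[OF rs_cong card_dvd N_dvd r_pos s_pos N_pos] by simp
  also have "\<dots> = 0"
    using sum_UNIV_power_eq_0_if_bij[OF bij_r N_pos not_dvd] by simp
  finally have "(\<Sum>x\<in>UNIV. (x ^ s * (x ^ (q - 1) + a)) ^ N) = 0" .
  moreover have "(\<Sum>x\<in>UNIV. (x ^ s * (x ^ (q - 1) + a)) ^ N) =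
      - (\<Sum>A\<in>S_set q e N s. of_nat (N choose A) * a ^ (N - A))"
    unfolding sum_UNIV_power_binomial[OF s_pos N_pos] S_set_eq_dvd[OF \<open>1 \<le> q\<close>] card_F ..
  ultimately show False
    using sum_ne_0 by simp
qed

end
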